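(* Let $G$ be a Lie group with Lie algebra $\mathfrak{g}$ and left-invariant metric given by an inner product $\langle\cdot,\cdot\rangle$ on $\mathfrak{g}$. Let $\mathfrak{n}$ be the nilradical of $\mathfrak{g}$ and $\mathfrak{r}$ its orthogonal complement, and assume $[\mathfrak{r},\mathfrak{r}]\subset\mathfrak{r}$. Let $\{r_i\}$ be an orthonormal basis of $\mathfrak{r}$. Then for all $A,B\in\mathfrak{r}$ and $Z,W\in\mathfrak{n}$: $$\langle \mathrm{M}Z,W\rangle=\langle\mathrm{M}_\mathfrak{n}Z,W\rangle+\tfrac12\sum_i\langle[\operatorname{ad}_{r_i}|_\mathfrak{n},\operatorname{ad}_{r_i}^t|_\mathfrak{n}]Z,W\rangle,$$ $$\langle\mathrm{M}A,B\rangle=\langle\mathrm{M}_\mathfrak{r}A,B\rangle-\tfrac12\operatorname{tr}(\operatorname{ad}_A|_\mathfrak{n}\operatorname{ad}_B^t|_\mathfrak{n}),$$ $$\langle\mathrm{M}A,W\rangle=-\tfrac12\operatorname{tr}(\operatorname{ad}_A|_\mathfrak{n}\operatorname{ad}_W^t|_\mathfrak{n}).$$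
   Context: For a Lie algebra $(\mathfrak{g},\mu)$ with inner product $\langle\cdot,\cdot\rangle$ and orthonormal basis $\{X_k\}$, the symmetric tensor $\mathrm{M}$ is $\mathrm{M}(X,Y)=-\tfrac12\sum_k\langle\mu(X,X_k),\mu(Y,X_k)\rangle+\tfrac14\sum_{k,j}\langle\mu(X_k,X_j),X\rangle\langle\mu(X_k,X_j),Y\rangle$, identified with the endomorphism $\mathrm{M}$ via $\langle\mathrm{M}X,Y\rangle=\mathrm{M}(X,Y)$. $\mathrm{M}_\mathfrak{n}$ (resp. $\mathrm{M}_\mathfrak{r}$) is the analogous endomorphism of $\mathfrak{n}$ (resp. $\mathfrak{r}$) with the restricted bracket and inner product. Transposes $^t$ are with respect to $\langle\cdot,\cdot\rangle$. *)

theory Defs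
  imports "HOL-Analysis.Analysis"
begin

text \<open>A real Lie algebra structure on a finite-dimensional inner product space 'a
  (the inner product of 'a plays the role of the left-invariant metric).\<close>
definition lie_algebra :: "('a::euclidean_space \<Rightarrow> 'a \<Rightarrow> 'a) \<Rightarrow> bool" where
  "lie_algebra \<mu> \<longleftrightarrow> bilinear \<mu> \<and> (\<forall>x. \<mu> x x = 0) \<and>
     (\<forall>x y z. \<mu> x (\<mu> y z) + \<mu> y (\<mu> z x) + \<mu> z (\<mu> x y) = 0)"

definition lie_ideal :: "('a::euclidean_space \<Rightarrow> 'a \<Rightarrow> 'a) \<Rightarrow> 'a set \<Rightarrow> bool" where
  "lie_ideal \<mu> I \<longleftrightarrow> subspace I \<and> (\<forall>x y. y \<in> I \<longrightarrow> \<mu> x y \<in> I)"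

fun lower_central :: "('a::euclidean_space \<Rightarrow> 'a \<Rightarrow> 'a) \<Rightarrow> 'a set \<Rightarrow> nat \<Rightarrow> 'a set" where
  "lower_central \<mu> I 0 = I"
| "lower_central \<mu> I (Suc k) = span {\<mu> x y | x y. x \<in> I \<and> y \<in> lower_central \<mu> I k}"

definition nilpotent_sub :: "('a::euclidean_space \<Rightarrow> 'a \<Rightarrow> 'a) \<Rightarrow> 'a set \<Rightarrow> bool" where
  "nilpotent_sub \<mu> I \<longleftrightarrow> (\<exists>k. lower_central \<mu> I k = {0})"

definition is_nilradical :: "('a::euclidean_space \<Rightarrow> 'a \<Rightarrow> 'a) \<Rightarrow> 'a set \<Rightarrow> bool" where
  "is_nilradical \<mu> N \<longleftrightarrow> lie_ideal \<mu> N \<and> nilpotent_sub \<mu> N \<and>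
     (\<forall>I. lie_ideal \<mu> I \<and> nilpotent_sub \<mu> I \<longrightarrow> I \<subseteq> N)"

definition onb :: "'a::euclidean_space set \<Rightarrow> 'a set \<Rightarrow> bool" where
  "onb V B \<longleftrightarrow> finite B \<and> B \<subseteq> V \<and> span B = V \<and> (\<forall>b\<in>B. norm b = 1) \<and> pairwise orthogonal B"

text \<open>The symmetric form M of the Lie algebra (V, restricted bracket, restricted inner product),
  computed in an orthonormal basis of V.  Mform mu UNIV is M, Mform mu n is M_n.\<close>
definition Mform :: "('a::euclidean_space \<Rightarrow> 'a \<Rightarrow> 'a) \<Rightarrow> 'a set \<Rightarrow> 'a \<Rightarrow> 'a \<Rightarrow> real" where
  "Mform \<mu> V X Y = (let B = (SOME B. onb V B) in
     - 1/2 * (\<Sum>k\<in>B. inner (\<mu> X k) (\<mu> Y k))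
     + 1/4 * (\<Sum>k\<in>B. \<Sum>j\<in>B. inner (\<mu> k j) X * inner (\<mu> k j) Y))"

text \<open>Transpose (within V) of the restriction of T to V:
  the map V \<rightarrow> V with inner (transp_on_sub V T x) y = inner x (T y) for x y in V.\<close>
definition transp_on_sub :: "'a::euclidean_space set \<Rightarrow> ('a \<Rightarrow> 'a) \<Rightarrow> 'a \<Rightarrow> 'a" where
  "transp_on_sub V T x = (let B = (SOME B. onb V B) in (\<Sum>b\<in>B. inner x (T b) *\<^sub>R b))"

definition trace_on :: "'a::euclidean_space set \<Rightarrow> ('a \<Rightarrow> 'a) \<Rightarrow> real" where
  "trace_on V T = (let B = (SOME B. onb V B) in (\<Sum>b\<in>B. inner (T b) b))"

end

theory Submission
  imports Defs
begin

text \<open>Completing an orthonormal basis R of r by one, N, of n gives an orthonormal basis of g, so M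
  splits into sums over R and N.  Since n is an ideal and r a subalgebra orthogonal to it, a
  structure constant \<open>\<langle>[k,j],X\<rangle>\<close> vanishes as soon as [k,j] and X lie in orthogonal summands.
  What survives beyond \<open>M\<^sub>n\<close> and \<open>M\<^sub>r\<close> are sums over N of products of brackets with an
  element of r, and these are the traces and matrix entries of \<open>ad|\<^sub>n ad\<^sup>t|\<^sub>n\<close> in the
  statement.\<close>

lemma onb_inner:
  assumes "onb V B" "b \<in> B" "c \<in> B"
  shows "inner b c = (if b = c then 1 else 0)"
  using assms unfolding onb_def pairwise_def orthogonal_def
  by (auto simp: norm_eq_1)

lemma onb_expansion:
  assumes B: "onb V B" and v: "v \<in> V"
  shows "(\<Sum>b\<in>B. inner v b *\<^sub>R b) = v"
proof -
  let ?P = "\<Sum>b\<in>B. inner v b *\<^sub>R b"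
  have orth: "pairwise orthogonal B" and "v \<in> span B"
    using B v by (auto simp: onb_def)
  have "?P \<in> span B"
    by (intro span_sum span_scale span_base)
  with \<open>v \<in> span B\<close> have "v - ?P \<in> span B"
    by (rule span_diff)
  then have "orthogonal (v - ?P) (v - (\<Sum>b\<in>B. (inner b v / inner b b) *\<^sub>R b))"
    by (rule Gram_Schmidt_step[OF orth])
  moreover have "(\<Sum>b\<in>B. (inner b v / inner b b) *\<^sub>R b) = ?P"
    by (intro sum.cong refl) (simp add: onb_inner[OF B] inner_commute)
  ultimately show ?thesis
    by (simp add: orthogonal_def)
qed

lemma onb_parseval:
  assumes "onb V B" "v \<in> V"
  shows "inner v w = (\<Sum>b\<in>B. inner v b * inner b w)"
proof -
  have "inner v w = inner (\<Sum>b\<in>B. inner v b *\<^sub>R b) w"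
    using onb_expansion[OF assms] by simp
  then show ?thesis
    by (simp add: inner_sum_left)
qed

lemma onb_exists:
  assumes "subspace V"
  shows "\<exists>B. onb V B"
proof -
  obtain B where "B \<subseteq> V" "pairwise orthogonal B" "\<And>x. x \<in> B \<Longrightarrow> norm x = 1"
    "independent B" "span B = V"
    using orthonormal_basis_subspace[OF assms] by metis
  then show ?thesis
    unfolding onb_def using independent_imp_finite by blast
qed

lemma onb_some:
  assumes "onb V B"
  shows "onb V (SOME B. onb V B)"
  using assms by (rule someI)

lemma onb_Un_orthogonal_complement:
  assumes V: "subspace V" and B: "onb V B" and C: "onb {x. \<forall>y\<in>V. inner x y = 0} C"
  shows "onb UNIV (C \<union> B)" and "C \<inter> B = {}"
proof -
  have orth: "inner c b = 0" if "c \<in> C" "b \<in> B" for c b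
    using that B C by (auto simp: onb_def)
  show "C \<inter> B = {}"
    using orth onb_inner[OF B] by fastforce
  have "x \<in> span (C \<union> B)" for x
  proof -
    obtain y z where y: "y \<in> span V" and z: "\<And>w. w \<in> span V \<Longrightarrow> orthogonal z w" and "x = y + z"
      using orthogonal_subspace_decomp_exists by metis
    have "span V = V" "span B = V" "span C = {x. \<forall>y\<in>V. inner x y = 0}"
      using V B C by (simp_all add: onb_def)
    with y z have "y \<in> span B" and "z \<in> span C"
      by (auto simp: orthogonal_def)
    moreover note \<open>x = y + z\<close>
    ultimately show ?thesis
      by (metis span_add span_mono subsetD sup_ge1 sup_ge2)
  qed
  moreover have "pairwise orthogonal (C \<union> B)"
    unfolding pairwise_def orthogonal_def
    using orth onb_inner[OF B] onb_inner[OF C] by (metis Un_iff inner_commute)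
  ultimately show "onb UNIV (C \<union> B)"
    using B C by (auto simp: onb_def)
qed

lemma linear_inner_left_comp:
  assumes "linear f"
  shows "linear (\<lambda>x. inner (f x) y)"
  using assms by (simp add: linear_iff inner_add_left)

lemma bilinear_inner_comp:
  assumes "linear f" "linear g"
  shows "bilinear (\<lambda>a b. inner (f a) (g b))"
  using assms by (simp add: bilinear_def linear_iff inner_add_left inner_add_right)

lemma bilinear_mult_comp:
  assumes "linear f" "linear g"
  shows "bilinear (\<lambda>a b. f a * g b :: real)"
  using assms by (simp add: bilinear_def linear_iff algebra_simps)

lemma onb_sum_bilinear_diag:
  assumes B: "onb V B" and C: "onb V C" and f: "bilinear f"
  shows "(\<Sum>b\<in>B. f b b) = (\<Sum>c\<in>C. f c c :: real)"
proof -
  have lin_l: "linear (\<lambda>x. f x y)" and lin_r: "linear (f x)" for x y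
    using f by (simp_all add: bilinear_def)
  have "(\<Sum>b\<in>B. f b b) = (\<Sum>b\<in>B. f (\<Sum>c\<in>C. inner b c *\<^sub>R c) b)"
    using B onb_expansion[OF C] by (intro sum.cong refl) (auto simp: onb_def)
  also have "\<dots> = (\<Sum>c\<in>C. \<Sum>b\<in>B. inner c b * f c b)"
    by (subst sum.swap) (simp add: linear_sum[OF lin_l] linear_scale[OF lin_l] inner_commute)
  also have "\<dots> = (\<Sum>c\<in>C. f c (\<Sum>b\<in>B. inner c b *\<^sub>R b))"
    by (simp add: linear_sum[OF lin_r] linear_scale[OF lin_r])
  also have "\<dots> = (\<Sum>c\<in>C. f c c)"
    using C onb_expansion[OF B] by (intro sum.cong refl) (auto simp: onb_def)
  finally show ?thesis .
qed

lemma Mform_onb: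
  assumes \<mu>: "bilinear \<mu>" and C: "onb V C"
  shows "Mform \<mu> V X Y = - 1/2 * (\<Sum>k\<in>C. inner (\<mu> X k) (\<mu> Y k))
     + 1/4 * (\<Sum>k\<in>C. \<Sum>j\<in>C. inner (\<mu> k j) X * inner (\<mu> k j) Y)"
proof -
  define B where "B = (SOME B. onb V B)"
  have B: "onb V B"
    unfolding B_def using C by (rule onb_some)
  have lin_l: "linear (\<lambda>x. \<mu> x y)" and lin_r: "linear (\<mu> x)" for x y
    using \<mu> by (simp_all add: bilinear_def)
  have "(\<Sum>k\<in>B. inner (\<mu> X k) (\<mu> Y k)) = (\<Sum>k\<in>C. inner (\<mu> X k) (\<mu> Y k))"
    by (rule onb_sum_bilinear_diag[OF B C bilinear_inner_comp[OF lin_r lin_r]])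
  moreover have "(\<Sum>k\<in>B. \<Sum>j\<in>B. inner (\<mu> k j) X * inner (\<mu> k j) Y)
      = (\<Sum>k\<in>C. \<Sum>j\<in>C. inner (\<mu> k j) X * inner (\<mu> k j) Y)"
  proof -
    have "(\<Sum>k\<in>B. \<Sum>j\<in>B. inner (\<mu> k j) X * inner (\<mu> k j) Y)
        = (\<Sum>j\<in>C. \<Sum>k\<in>B. inner (\<mu> k j) X * inner (\<mu> k j) Y)"
      by (subst sum.swap)
        (intro sum.cong refl onb_sum_bilinear_diag[OF B C]
          bilinear_mult_comp linear_inner_left_comp lin_r)
    also have "\<dots> = (\<Sum>k\<in>C. \<Sum>j\<in>C. inner (\<mu> k j) X * inner (\<mu> k j) Y)"
      by (subst sum.swap[of _ C])
        (intro sum.cong refl onb_sum_bilinear_diag[OF B C]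
          bilinear_mult_comp linear_inner_left_comp lin_l)
    finally show ?thesis .
  qed
  ultimately show ?thesis
    unfolding Mform_def B_def[symmetric] Let_def by simp
qed

lemma transp_on_sub_in_subspace:
  assumes "subspace V"
  shows "transp_on_sub V T x \<in> V"
proof -
  define B where "B = (SOME B. onb V B)"
  have "onb V B"
    unfolding B_def using onb_exists[OF assms] by (metis onb_some)
  then have "span B = V"
    by (simp add: onb_def)
  moreover have "(\<Sum>b\<in>B. inner x (T b) *\<^sub>R b) \<in> span B"
    by (intro span_sum span_scale span_base)
  ultimately show ?thesis
    unfolding transp_on_sub_def B_def[symmetric] Let_def by simp
qed

lemma inner_transp_on_sub:
  assumes V: "subspace V" and T: "linear T" and v: "v \<in> V"
  shows "inner (transp_on_sub V T x) v = inner x (T v)"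
proof -
  define B where "B = (SOME B. onb V B)"
  have B: "onb V B"
    unfolding B_def using onb_exists[OF V] by (metis onb_some)
  have "inner (transp_on_sub V T x) v = (\<Sum>b\<in>B. inner x (T b) * inner b v)"
    unfolding transp_on_sub_def B_def[symmetric] Let_def
    by (simp add: inner_sum_left)
  also have "\<dots> = inner x (T (\<Sum>b\<in>B. inner v b *\<^sub>R b))"
    by (simp add: linear_sum[OF T] linear_scale[OF T] inner_sum_right mult.commute inner_commute[of v])
  finally show ?thesis
    using onb_expansion[OF B v] by simp
qed

lemma transp_on_sub_onb:
  assumes B: "onb V B" and T: "linear T"
  shows "transp_on_sub V T x = (\<Sum>b\<in>B. inner x (T b) *\<^sub>R b)"
proof -
  have V: "subspace V"
    using B by (metis onb_def subspace_span)
  have "b \<in> V" if "b \<in> B" for b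
    using B that by (auto simp: onb_def)
  then have "(\<Sum>b\<in>B. inner (transp_on_sub V T x) b *\<^sub>R b) = (\<Sum>b\<in>B. inner x (T b) *\<^sub>R b)"
    by (simp add: inner_transp_on_sub[OF V T])
  then show ?thesis
    using onb_expansion[OF B transp_on_sub_in_subspace[OF V]] by simp
qed

lemma inner_comp_transp_on_sub:
  assumes B: "onb V B" and S: "linear S" and T: "linear T"
  shows "inner (S (transp_on_sub V T x)) y = (\<Sum>b\<in>B. inner x (T b) * inner (S b) y)"
  unfolding transp_on_sub_onb[OF B T]
  by (simp add: linear_sum[OF S] linear_scale[OF S] inner_sum_left)

lemma trace_on_comp_transp_on_sub:
  assumes B: "onb V B" and S: "linear S" and T: "linear T"
    and SV: "\<And>v. v \<in> V \<Longrightarrow> S v \<in> V"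
  shows "trace_on V (\<lambda>x. S (transp_on_sub V T x)) = (\<Sum>b\<in>B. inner (S b) (T b))"
proof -
  define B0 where "B0 = (SOME B. onb V B)"
  have B0: "onb V B0"
    unfolding B0_def using B by (rule onb_some)
  have "trace_on V (\<lambda>x. S (transp_on_sub V T x)) = (\<Sum>c\<in>B0. \<Sum>b\<in>B0. inner c (T b) * inner (S b) c)"
    unfolding trace_on_def B0_def[symmetric] Let_def
    by (simp add: inner_comp_transp_on_sub[OF B0 S T])
  also have "\<dots> = (\<Sum>b\<in>B0. \<Sum>c\<in>B0. inner (S b) c * inner c (T b))"
    by (subst sum.swap) (simp add: mult.commute)
  also have "\<dots> = (\<Sum>b\<in>B0. inner (S b) (T b))"
    using B0 SV by (intro sum.cong refl onb_parseval[OF B0, symmetric]) (auto simp: onb_def)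
  also have "\<dots> = (\<Sum>b\<in>B. inner (S b) (T b))"
    by (rule onb_sum_bilinear_diag[OF B0 B bilinear_inner_comp[OF S T]])
  finally show ?thesis .
qed

lemma lie_algebra_antisym:
  assumes "lie_algebra \<mu>"
  shows "\<mu> a b = - \<mu> b a"
proof -
  have \<mu>: "bilinear \<mu>" and alt: "\<And>x. \<mu> x x = 0"
    using assms by (auto simp: lie_algebra_def)
  have "0 = \<mu> (a + b) (a + b)"
    using alt by simp
  also have "\<dots> = \<mu> a b + \<mu> b a"
    by (simp only: bilinear_ladd[OF \<mu>] bilinear_radd[OF \<mu>]) (simp add: alt)
  finally have "\<mu> a b + \<mu> b a = 0"
    by (rule sym)
  then show ?thesis
    by (simp add: eq_neg_iff_add_eq_0)
qed

locale ideal_orthogonal_complement =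
  fixes \<mu> :: "'a::euclidean_space \<Rightarrow> 'a \<Rightarrow> 'a" and n r R N :: "'a set"
  assumes lie: "lie_algebra \<mu>"
    and ideal: "lie_ideal \<mu> n"
    and complement: "r = {x. \<forall>y\<in>n. inner x y = 0}"
    and subalgebra: "\<forall>A\<in>r. \<forall>B\<in>r. \<mu> A B \<in> r"
    and onb_r: "onb r R"
    and onb_n: "onb n N"
begin

abbreviation bracket_pairing :: "'a set \<Rightarrow> 'a set \<Rightarrow> 'a \<Rightarrow> 'a \<Rightarrow> real" where
  "bracket_pairing K J X Y \<equiv> \<Sum>k\<in>K. \<Sum>j\<in>J. inner (\<mu> k j) X * inner (\<mu> k j) Y"

lemma bilinear_bracket: "bilinear \<mu>"
  using lie by (simp add: lie_algebra_def)

lemma linear_bracket: "linear (\<mu> x)"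
  using bilinear_bracket by (simp add: bilinear_def)

lemma subspace_n: "subspace n"
  using ideal by (simp add: lie_ideal_def)

lemma bracket_in_ideal_right: "y \<in> n \<Longrightarrow> \<mu> x y \<in> n"
  using ideal by (simp add: lie_ideal_def)

lemma bracket_in_ideal_left: "x \<in> n \<Longrightarrow> \<mu> x y \<in> n"
  using bracket_in_ideal_right[of x y] lie_algebra_antisym[OF lie, of x y] subspace_neg[OF subspace_n]
  by simp

lemma inner_r_n:
  assumes "x \<in> r" "y \<in> n"
  shows "inner x y = 0" and "inner y x = 0"
  using assms complement by (auto simp: inner_commute)

lemma R_subset: "R \<subseteq> r" and N_subset: "N \<subseteq> n"
  using onb_r onb_n by (auto simp: onb_def)

lemma Mform_UNIV:
  "Mform \<mu> UNIV X Y = - 1/2 * ((\<Sum>k\<in>R. inner (\<mu> X k) (\<mu> Y k)) + (\<Sum>k\<in>N. inner (\<mu> X k) (\<mu> Y k)))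
     + 1/4 * (bracket_pairing R R X Y + bracket_pairing R N X Y
              + bracket_pairing N R X Y + bracket_pairing N N X Y)"
proof -
  have fin: "finite R" "finite N"
    using onb_r onb_n by (auto simp: onb_def)
  note U = onb_Un_orthogonal_complement[OF subspace_n onb_n onb_r[unfolded complement]]
  show ?thesis
    unfolding Mform_onb[OF bilinear_bracket U(1)]
    using fin U(2) by (simp add: sum.union_disjoint sum.distrib)
qed

lemma bracket_pairing_eq_0:
  assumes "\<And>k j. k \<in> K \<Longrightarrow> j \<in> J \<Longrightarrow> inner (\<mu> k j) X = 0 \<or> inner (\<mu> k j) Y = 0"
  shows "bracket_pairing K J X Y = 0"
  using assms by (intro sum.neutral ballI) auto

lemma bracket_pairing_RR:
  assumes "Y \<in> n"
  shows "bracket_pairing R R X Y = 0"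
  using assms R_subset subalgebra inner_r_n by (intro bracket_pairing_eq_0) blast

lemma bracket_pairing_N:
  assumes "X \<in> r"
  shows "bracket_pairing N J X Y = 0" and "bracket_pairing K N X Y = 0"
  using assms N_subset bracket_in_ideal_left bracket_in_ideal_right inner_r_n
  by (auto intro!: bracket_pairing_eq_0)

lemma bracket_pairing_swap: "bracket_pairing N R X Y = bracket_pairing R N X Y"
proof -
  have "inner (\<mu> k j) X * inner (\<mu> k j) Y = inner (\<mu> j k) X * inner (\<mu> j k) Y" for k j
    using lie_algebra_antisym[OF lie, of k j] by simp
  then have "bracket_pairing N R X Y = (\<Sum>k\<in>N. \<Sum>j\<in>R. inner (\<mu> j k) X * inner (\<mu> j k) Y)"
    by (intro sum.cong refl)
  then show ?thesis
    by (simp add: sum.swap[of _ N])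
qed

lemma trace_ad_comp_transp:
  "trace_on n (\<lambda>x. \<mu> A (transp_on_sub n (\<mu> B) x)) = (\<Sum>k\<in>N. inner (\<mu> A k) (\<mu> B k))"
  by (rule trace_on_comp_transp_on_sub[OF onb_n linear_bracket linear_bracket bracket_in_ideal_right])

lemma Mform_ideal:
  assumes Z: "Z \<in> n" and W: "W \<in> n"
  shows "Mform \<mu> UNIV Z W = Mform \<mu> n Z W
    + 1/2 * (\<Sum>ri\<in>R. inner (\<mu> ri (transp_on_sub n (\<mu> ri) Z) - transp_on_sub n (\<mu> ri) (\<mu> ri Z)) W)"
proof -
  have "inner (\<mu> ri (transp_on_sub n (\<mu> ri) Z)) W = (\<Sum>j\<in>N. inner (\<mu> ri j) Z * inner (\<mu> ri j) W)" for ri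
    by (simp only: inner_comp_transp_on_sub[OF onb_n linear_bracket linear_bracket] inner_commute[of Z])
  moreover have "inner (transp_on_sub n (\<mu> ri) (\<mu> ri Z)) W = inner (\<mu> Z ri) (\<mu> W ri)" for ri
    using lie_algebra_antisym[OF lie, of ri Z] lie_algebra_antisym[OF lie, of ri W]
    by (simp add: inner_transp_on_sub[OF subspace_n linear_bracket W])
  ultimately show ?thesis
    unfolding Mform_UNIV Mform_onb[OF bilinear_bracket onb_n] bracket_pairing_RR[OF W] bracket_pairing_swap
    by (simp add: inner_diff_left sum_subtractf field_simps)
qed

lemma Mform_complement:
  assumes A: "A \<in> r" and B: "B \<in> r"
  shows "Mform \<mu> UNIV A B = Mform \<mu> r A B - 1/2 * trace_on n (\<lambda>x. \<mu> A (transp_on_sub n (\<mu> B) x))"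
  unfolding Mform_UNIV Mform_onb[OF bilinear_bracket onb_r] bracket_pairing_N[OF A] trace_ad_comp_transp
  by (simp add: add_divide_distrib)

lemma Mform_complement_ideal:
  assumes A: "A \<in> r" and W: "W \<in> n"
  shows "Mform \<mu> UNIV A W = - 1/2 * trace_on n (\<lambda>x. \<mu> A (transp_on_sub n (\<mu> W) x))"
proof -
  have "(\<Sum>k\<in>R. inner (\<mu> A k) (\<mu> W k)) = 0"
    using A W R_subset subalgebra bracket_in_ideal_left inner_r_n by (intro sum.neutral) blast
  then show ?thesis
    unfolding Mform_UNIV bracket_pairing_N[OF A] bracket_pairing_RR[OF W] trace_ad_comp_transp
    by simp
qed

end

theorem lemma3p2:
  fixes \<mu> :: "'a::euclidean_space \<Rightarrow> 'a \<Rightarrow> 'a"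
    and n r R :: "'a set"
  assumes "lie_algebra \<mu>"
    and "is_nilradical \<mu> n"
    and "r = {x. \<forall>y\<in>n. inner x y = 0}"
    and "\<forall>A\<in>r. \<forall>B\<in>r. \<mu> A B \<in> r"
    and "onb r R"
  shows "(\<forall>Z\<in>n. \<forall>W\<in>n. Mform \<mu> UNIV Z W =
            Mform \<mu> n Z W
            + 1/2 * (\<Sum>ri\<in>R. inner (\<mu> ri (transp_on_sub n (\<mu> ri) Z) - transp_on_sub n (\<mu> ri) (\<mu> ri Z)) W))
       \<and> (\<forall>A\<in>r. \<forall>B\<in>r. Mform \<mu> UNIV A B =
            Mform \<mu> r A B - 1/2 * trace_on n (\<lambda>x. \<mu> A (transp_on_sub n (\<mu> B) x)))
       \<and> (\<forall>A\<in>r. \<forall>W\<in>n. Mform \<mu> UNIV A W =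
            - 1/2 * trace_on n (\<lambda>x. \<mu> A (transp_on_sub n (\<mu> W) x)))"
proof -
  have ideal: "lie_ideal \<mu> n"
    using assms(2) by (simp add: is_nilradical_def)
  then have "subspace n"
    by (simp add: lie_ideal_def)
  then obtain N where "onb n N"
    using onb_exists by blast
  then interpret ideal_orthogonal_complement \<mu> n r R N
    using assms ideal by unfold_locales
  show ?thesis
    using Mform_ideal Mform_complement Mform_complement_ideal by blast
qed

end
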